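(* Let $0\le\beta<1$, $s=s_n\ll n/\log n$, $S\subset[n]$ with $|S|=s$, $A=A_n\ge0$ and $\lambda=\lambda_n\in\mathbb R$ with $s\max\{|\tanh(\lambda+A)|,\tanh(A)\}\ll\sqrt n$. Then $$\mathbb E_{\beta,\mathbf Q^{\rm CW},\boldsymbol\mu_S(A)}\Big(\exp\big(\lambda\sum_{i\in S}X_i\big)\Big)=(1+o(1))\Big(\frac{\cosh(A+\lambda)}{\cosh(A)}\Big)^s.$$
   Context: Ising model $\mathbb P_{\beta,\mathbf Q,\boldsymbol\mu}(\mathbf X=\mathbf x)=Z(\beta,\mathbf Q,\boldsymbol\mu)^{-1}\exp(\frac\beta2\mathbf x^\top\mathbf Q\mathbf x+\boldsymbol\mu^\top\mathbf x)$ on $\{-1,1\}^n$; $\mathbf Q^{\rm CW}_{ij}=\mathbf 1(i\ne j)/n$; $\boldsymbol\mu_S(A)$ has entries $A\mathbf 1(i\in S)$. $a_n\ll b_n$ means $a_n/b_n\to0$. *)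

theory Defs
  imports "HOL-Analysis.Analysis"
begin

text \<open>Spin configurations on [n], with [n] rendered 0-based as {..<n}.\<close>
definition spins :: "nat \<Rightarrow> (nat \<Rightarrow> real) set" where
  "spins n = PiE {..<n} (\<lambda>_. {-1, 1})"

definition ising_weight ::
  "nat \<Rightarrow> real \<Rightarrow> (nat \<Rightarrow> nat \<Rightarrow> real) \<Rightarrow> (nat \<Rightarrow> real) \<Rightarrow> (nat \<Rightarrow> real) \<Rightarrow> real" where
  "ising_weight n \<beta> Q \<mu> x =
     exp (\<beta> / 2 * (\<Sum>i<n. \<Sum>j<n. x i * Q i j * x j) + (\<Sum>i<n. \<mu> i * x i))"

definition ising_Z ::
  "nat \<Rightarrow> real \<Rightarrow> (nat \<Rightarrow> nat \<Rightarrow> real) \<Rightarrow> (nat \<Rightarrow> real) \<Rightarrow> real" where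
  "ising_Z n \<beta> Q \<mu> = (\<Sum>x\<in>spins n. ising_weight n \<beta> Q \<mu> x)"

definition ising_expect ::
  "nat \<Rightarrow> real \<Rightarrow> (nat \<Rightarrow> nat \<Rightarrow> real) \<Rightarrow> (nat \<Rightarrow> real) \<Rightarrow> ((nat \<Rightarrow> real) \<Rightarrow> real) \<Rightarrow> real" where
  "ising_expect n \<beta> Q \<mu> f =
     (\<Sum>x\<in>spins n. f x * ising_weight n \<beta> Q \<mu> x) / ising_Z n \<beta> Q \<mu>"

definition Q_CW :: "nat \<Rightarrow> nat \<Rightarrow> nat \<Rightarrow> real" where
  "Q_CW n i j = (if i \<noteq> j then 1 / real n else 0)"

definition mu_S :: "nat set \<Rightarrow> real \<Rightarrow> nat \<Rightarrow> real" where
  "mu_S S A i = (if i \<in> S then A else 0)"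

end

(*
  Because Q_CW has zero diagonal, the expectation is Z(A + lambda) / Z(A) for the partition
  function Z(a) = sum_x exp (beta M(x)^2 / (2n) + a T(x)), M and T the total and S-magnetisations.
  Hubbard-Stratonovich writes sqrt (2 pi) Z(a) as the Gaussian integral of
  (2 cosh (c g))^(n-s) (2 cosh (c g + a))^s with c = sqrt (beta / n).  Since Z is even in a,
  averaging the integrands for a and -a and using cosh (y + a) = cosh y cosh a (1 + tanh y tanh a)
  shows that Z(a) / cosh a ^ s - Z(0) has an integrand between 0 and
  (2 cosh y)^n (cosh (s |tanh a| y) - 1), y = c g.  With cosh y <= exp (y^2 / 2) and beta < 1
  this integrates to 2^n (exp (eps^2 / (2 (1 - beta))) - 1) / sqrt (1 - beta), where
  eps = s |tanh a| sqrt (beta / n), while Z(0) >= 2^n.  Hence Z(a) = (1 + o(1)) cosh a ^ s Z(0)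
  as soon as eps -> 0, which the hypotheses give for a = A and a = A + lambda.
*)

theory Submission
  imports Defs "HOL-Probability.Distributions"
begin

lemma has_bochner_integral_gaussian_mgf:
  fixes p e :: real
  assumes "p > 0"
  shows "has_bochner_integral lborel (\<lambda>g. exp (- p * g\<^sup>2 / 2) * exp (e * g))
           (sqrt (2 * pi / p) * exp (e\<^sup>2 / (2 * p)))"
proof -
  define \<sigma> where "\<sigma> = sqrt (1 / p)"
  have \<sigma>: "\<sigma> > 0" "\<sigma>\<^sup>2 = 1 / p" using assms by (auto simp: \<sigma>_def)
  let ?C = "sqrt (2 * pi / p) * exp (e\<^sup>2 / (2 * p))"
  have "has_bochner_integral lborel (normal_density (e / p) \<sigma>) 1"
    using integrable_normal_density integral_normal_density \<sigma>(1)
    by (simp add: has_bochner_integral_iff)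
  then have "has_bochner_integral lborel (\<lambda>g. ?C * normal_density (e / p) \<sigma> g) (?C * 1)"
    by (rule has_bochner_integral_mult_right)
  moreover have "?C * normal_density (e / p) \<sigma> g = exp (- p * g\<^sup>2 / 2) * exp (e * g)" for g
  proof -
    have "e\<^sup>2 / (2 * p) + - (g - e / p)\<^sup>2 / (2 * \<sigma>\<^sup>2) = - p * g\<^sup>2 / 2 + e * g"
      unfolding \<sigma>(2) using assms by (simp add: field_simps power2_eq_square)
    then show ?thesis
      using assms \<sigma> by (simp add: normal_density_def exp_add[symmetric] real_sqrt_divide)
  qed
  ultimately show ?thesis by simp
qed

lemma has_bochner_integral_gaussian_cosh_minus_one:
  fixes p e :: real
  assumes "p > 0"
  shows "has_bochner_integral lborel (\<lambda>g. exp (- p * g\<^sup>2 / 2) * (cosh (e * g) - 1))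
           (sqrt (2 * pi / p) * (exp (e\<^sup>2 / (2 * p)) - 1))"
proof -
  let ?q = "\<lambda>e g. exp (- p * g\<^sup>2 / 2) * exp (e * g)"
  have "has_bochner_integral lborel (\<lambda>g. (?q e g + ?q (- e) g) / 2 - ?q 0 g)
          ((sqrt (2 * pi / p) * exp (e\<^sup>2 / (2 * p)) + sqrt (2 * pi / p) * exp ((- e)\<^sup>2 / (2 * p))) / 2
           - sqrt (2 * pi / p) * exp (0\<^sup>2 / (2 * p)))"
    by (intro has_bochner_integral_diff has_bochner_integral_divide_zero has_bochner_integral_add
        has_bochner_integral_gaussian_mgf assms)
  then show ?thesis
    by (simp add: cosh_field_def field_simps)
qed

lemma sum_spins_exp_linear:
  "(\<Sum>x\<in>spins n. exp (\<Sum>i<n. b i * x i)) = (\<Prod>i<n. 2 * cosh (b i))"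
proof -
  have "(\<Sum>x\<in>spins n. exp (\<Sum>i<n. b i * x i)) = (\<Sum>x\<in>spins n. \<Prod>i<n. exp (b i * x i))"
    by (simp add: exp_sum)
  also have "\<dots> = (\<Prod>i<n. \<Sum>v\<in>{-1, 1}. exp (b i * v))"
    unfolding spins_def by (rule prod_sum_PiE[symmetric]) auto
  also have "\<dots> = (\<Prod>i<n. 2 * cosh (b i))"
    by (intro prod.cong) (auto simp: cosh_field_def)
  finally show ?thesis .
qed

lemma sum_lessThan_indicator_mult:
  fixes x :: "nat \<Rightarrow> real"
  assumes "S \<subseteq> {..<n}"
  shows "(\<Sum>i<n. (if i \<in> S then a else 0) * x i) = a * (\<Sum>i\<in>S. x i)"
proof -
  have "(\<Sum>i<n. (if i \<in> S then a else 0) * x i) = (\<Sum>i<n. if i \<in> S then a * x i else 0)"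
    by (intro sum.cong) auto
  also have "\<dots> = (\<Sum>i\<in>{..<n} \<inter> S. a * x i)"
    by (simp add: sum.inter_restrict)
  also have "{..<n} \<inter> S = S" using assms by blast
  finally show ?thesis by (simp add: sum_distrib_left)
qed

lemma sum_spins_exp_field:
  assumes "S \<subseteq> {..<n}"
  shows "(\<Sum>x\<in>spins n. exp (h * (\<Sum>i<n. x i) + a * (\<Sum>i\<in>S. x i)))
           = (2 * cosh h) ^ (n - card S) * (2 * cosh (h + a)) ^ card S"
proof -
  let ?b = "\<lambda>i. h + (if i \<in> S then a else 0)"
  have "h * (\<Sum>i<n. x i) + a * (\<Sum>i\<in>S. x i) = (\<Sum>i<n. ?b i * x i)" for x :: "nat \<Rightarrow> real"
    using sum_lessThan_indicator_mult[OF assms, of a x]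
    by (simp add: sum_distrib_left distrib_right sum.distrib)
  then have "(\<Sum>x\<in>spins n. exp (h * (\<Sum>i<n. x i) + a * (\<Sum>i\<in>S. x i))) = (\<Prod>i<n. 2 * cosh (?b i))"
    by (simp add: sum_spins_exp_linear)
  also have "\<dots> = (\<Prod>i<n. if i \<in> S then 2 * cosh (h + a) else 2 * cosh h)"
    by (intro prod.cong) auto
  also have "\<dots> = (\<Prod>i\<in>S. 2 * cosh (h + a)) * (\<Prod>i\<in>{..<n} - S. 2 * cosh h)"
    using prod.If_cases[of "{..<n}" "\<lambda>i. i \<in> S" "\<lambda>_. 2 * cosh (h + a)" "\<lambda>_. 2 * cosh h"] assms
    by (simp add: Int_absorb1 Diff_eq[symmetric])
  finally show ?thesis
    using assms by (simp add: card_Diff_subset finite_subset mult.commute)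
qed

(* Partition function of the Curie-Weiss model with field a on S, without the factor
   exp (- beta / 2) that comes from the zero diagonal of Q_CW. *)
definition cw_Z :: "nat \<Rightarrow> real \<Rightarrow> nat set \<Rightarrow> real \<Rightarrow> real" where
  "cw_Z n \<beta> S a = (\<Sum>x\<in>spins n. exp (\<beta> * (\<Sum>i<n. x i)\<^sup>2 / (2 * real n) + a * (\<Sum>i\<in>S. x i)))"

lemma cw_Z_pos: "0 < cw_Z n \<beta> S a"
  unfolding cw_Z_def spins_def by (intro sum_pos) (auto simp: finite_PiE PiE_eq_empty_iff)

lemma cw_Z_zero_ge: "\<beta> \<ge> 0 \<Longrightarrow> 2 ^ n \<le> cw_Z n \<beta> S 0"
proof -
  assume "\<beta> \<ge> 0"
  then have "(\<Sum>x\<in>spins n. 1) \<le> cw_Z n \<beta> S 0"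
    unfolding cw_Z_def by (intro sum_mono) simp
  then show ?thesis
    by (simp add: spins_def card_PiE)
qed

lemma cw_Z_uminus:
  assumes "S \<subseteq> {..<n}"
  shows "cw_Z n \<beta> S (- a) = cw_Z n \<beta> S a"
proof -
  define flip where "flip x = restrict (\<lambda>i. - x i) {..<n}" for x :: "nat \<Rightarrow> real"
  have flip_spins: "flip x \<in> spins n" if "x \<in> spins n" for x
    using that by (auto simp: spins_def flip_def PiE_iff)
  have flip_flip: "flip (flip x) = x" if "x \<in> spins n" for x
    using that by (auto simp: spins_def flip_def PiE_iff extensional_def fun_eq_iff)
  have "(\<Sum>i<n. flip x i) = - (\<Sum>i<n. x i)" for x
    by (simp add: flip_def sum_negf)
  moreover have "(\<Sum>i\<in>S. flip x i) = - (\<Sum>i\<in>S. x i)" for x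
    using assms by (auto simp: flip_def sum_negf[symmetric] intro!: sum.cong)
  ultimately show ?thesis
    unfolding cw_Z_def
    by (intro sum.reindex_bij_witness[of _ flip flip]) (auto simp: flip_spins flip_flip)
qed

lemma spins_square:
  assumes "x \<in> spins n" "i < n"
  shows "x i * x i = 1"
proof -
  have "x i \<in> {-1, 1}"
    using assms by (auto simp: spins_def PiE_iff)
  then show ?thesis by auto
qed

lemma quadratic_form_Q_CW:
  assumes "x \<in> spins n"
  shows "(\<Sum>i<n. \<Sum>j<n. x i * Q_CW n i j * x j) = ((\<Sum>i<n. x i)\<^sup>2 - real n) / real n"
proof -
  have row: "(\<Sum>j<n. x i * Q_CW n i j * x j) = (x i * (\<Sum>j<n. x j) - 1) / real n" if "i < n" for i
  proof -
    have "(\<Sum>j<n. x i * Q_CW n i j * x j) = (\<Sum>j<n. x i * x j / n - (if j = i then x i * x j / n else 0))"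
      by (intro sum.cong) (auto simp: Q_CW_def)
    also have "\<dots> = (\<Sum>j<n. x i * x j / n) - x i * x i / n"
      using that by (simp add: sum_subtractf)
    finally show ?thesis
      using spins_square[OF assms that] by (simp add: sum_distrib_left sum_divide_distrib diff_divide_distrib)
  qed
  have "(\<Sum>i<n. \<Sum>j<n. x i * Q_CW n i j * x j) = (\<Sum>i<n. (x i * (\<Sum>j<n. x j) - 1) / real n)"
    by (intro sum.cong refl row) simp
  also have "\<dots> = ((\<Sum>i<n. x i)\<^sup>2 - real n) / real n"
    by (simp add: sum_divide_distrib[symmetric] sum_subtractf sum_distrib_right[symmetric] power2_eq_square)
  finally show ?thesis .
qed

lemma ising_weight_CW:
  assumes "x \<in> spins n" "n > 0" "S \<subseteq> {..<n}"
  shows "ising_weight n \<beta> (Q_CW n) (mu_S S A) x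
     = exp (- \<beta> / 2) * exp (\<beta> * (\<Sum>i<n. x i)\<^sup>2 / (2 * real n) + A * (\<Sum>i\<in>S. x i))"
proof -
  have "(\<Sum>i<n. mu_S S A i * x i) = A * (\<Sum>i\<in>S. x i)"
    unfolding mu_S_def using sum_lessThan_indicator_mult[OF assms(3)] .
  moreover have "\<beta> / 2 * (((\<Sum>i<n. x i)\<^sup>2 - real n) / real n) = - \<beta> / 2 + \<beta> * (\<Sum>i<n. x i)\<^sup>2 / (2 * real n)"
    using assms(2) by (simp add: field_simps)
  ultimately show ?thesis
    unfolding ising_weight_def quadratic_form_Q_CW[OF assms(1)] by (simp add: exp_add[symmetric])
qed

lemma ising_expect_CW_exp:
  assumes "n > 0" "S \<subseteq> {..<n}"
  shows "ising_expect n \<beta> (Q_CW n) (mu_S S A) (\<lambda>x. exp (l * (\<Sum>i\<in>S. x i)))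
       = cw_Z n \<beta> S (A + l) / cw_Z n \<beta> S A"
proof -
  have "ising_Z n \<beta> (Q_CW n) (mu_S S A) = exp (- \<beta> / 2) * cw_Z n \<beta> S A"
    unfolding ising_Z_def cw_Z_def sum_distrib_left[of "exp (- \<beta> / 2)"]
    by (rule sum.cong[OF refl]) (rule ising_weight_CW[OF _ assms])
  moreover have "exp (l * (\<Sum>i\<in>S. x i)) * ising_weight n \<beta> (Q_CW n) (mu_S S A) x
      = exp (- \<beta> / 2) * exp (\<beta> * (\<Sum>i<n. x i)\<^sup>2 / (2 * real n) + (A + l) * (\<Sum>i\<in>S. x i))"
    if "x \<in> spins n" for x
    using ising_weight_CW[OF that assms] by (simp add: exp_add distrib_right mult_ac)
  then have "(\<Sum>x\<in>spins n. exp (l * (\<Sum>i\<in>S. x i)) * ising_weight n \<beta> (Q_CW n) (mu_S S A) x)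
      = exp (- \<beta> / 2) * cw_Z n \<beta> S (A + l)"
    unfolding cw_Z_def sum_distrib_left[of "exp (- \<beta> / 2)"] by (rule sum.cong[OF refl])
  ultimately show ?thesis
    unfolding ising_expect_def by simp
qed

definition hs_integrand :: "nat \<Rightarrow> real \<Rightarrow> nat \<Rightarrow> real \<Rightarrow> real \<Rightarrow> real" where
  "hs_integrand n c s a g = exp (- g\<^sup>2 / 2) * (2 * cosh (c * g)) ^ (n - s) * (2 * cosh (c * g + a)) ^ s"

lemma cw_Z_hubbard_stratonovich:
  assumes "\<beta> \<ge> 0" "S \<subseteq> {..<n}"
  shows "has_bochner_integral lborel (hs_integrand n (sqrt (\<beta> / n)) (card S) a)
           (sqrt (2 * pi) * cw_Z n \<beta> S a)"
proof -
  define c where "c = sqrt (\<beta> / n)"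
  define M where "M x = (\<Sum>i<n. x i)" for x :: "nat \<Rightarrow> real"
  define T where "T x = (\<Sum>i\<in>S. x i)" for x :: "nat \<Rightarrow> real"
  have std_mgf: "has_bochner_integral lborel (\<lambda>g. exp (- g\<^sup>2 / 2) * exp (e * g))
      (sqrt (2 * pi) * exp (e\<^sup>2 / 2))" for e
    using has_bochner_integral_gaussian_mgf[of 1 e] by simp
  have "has_bochner_integral lborel (\<lambda>g. \<Sum>x\<in>spins n. exp (- g\<^sup>2 / 2) * exp (c * M x * g) * exp (a * T x))
          (\<Sum>x\<in>spins n. sqrt (2 * pi) * exp ((c * M x)\<^sup>2 / 2) * exp (a * T x))"
    by (intro has_bochner_integral_sum has_bochner_integral_mult_left std_mgf)
  moreover have "(\<Sum>x\<in>spins n. exp (- g\<^sup>2 / 2) * exp (c * M x * g) * exp (a * T x))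
      = hs_integrand n c (card S) a g" for g
  proof -
    have "(\<Sum>x\<in>spins n. exp (- g\<^sup>2 / 2) * exp (c * M x * g) * exp (a * T x))
        = exp (- g\<^sup>2 / 2) * (\<Sum>x\<in>spins n. exp ((c * g) * M x + a * T x))"
      by (simp add: sum_distrib_left exp_add mult_ac)
    then show ?thesis
      unfolding M_def T_def hs_integrand_def sum_spins_exp_field[OF assms(2)] by simp
  qed
  moreover have "(\<Sum>x\<in>spins n. sqrt (2 * pi) * exp ((c * M x)\<^sup>2 / 2) * exp (a * T x))
      = sqrt (2 * pi) * cw_Z n \<beta> S a"
    using assms(1) unfolding cw_Z_def
    by (simp add: c_def M_def T_def power_mult_distrib sum_distrib_left exp_add mult_ac)
  ultimately show ?thesis
    unfolding c_def by simp
qed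

lemma cw_Z_excess_has_integral:
  assumes "\<beta> \<ge> 0" "S \<subseteq> {..<n}"
  defines "c \<equiv> sqrt (\<beta> / n)" and "s \<equiv> card S"
  shows "has_bochner_integral lborel
           (\<lambda>g. (hs_integrand n c s a g + hs_integrand n c s (- a) g) / (2 * cosh a ^ s)
                - hs_integrand n c s 0 g)
           (sqrt (2 * pi) * (cw_Z n \<beta> S a / cosh a ^ s - cw_Z n \<beta> S 0))"
proof -
  have "has_bochner_integral lborel (hs_integrand n c s b) (sqrt (2 * pi) * cw_Z n \<beta> S b)" for b
    unfolding c_def s_def using cw_Z_hubbard_stratonovich[OF assms(1,2)] .
  then have "has_bochner_integral lborel
      (\<lambda>g. (hs_integrand n c s a g + hs_integrand n c s (- a) g) / (2 * cosh a ^ s)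
           - hs_integrand n c s 0 g)
      ((sqrt (2 * pi) * cw_Z n \<beta> S a + sqrt (2 * pi) * cw_Z n \<beta> S (- a)) / (2 * cosh a ^ s)
       - sqrt (2 * pi) * cw_Z n \<beta> S 0)"
    by (intro has_bochner_integral_diff has_bochner_integral_divide_zero has_bochner_integral_add)
  then show ?thesis
    using cw_Z_uminus[OF assms(2)] by (simp add: field_simps)
qed

lemma tanh_le_self: "x \<ge> 0 \<Longrightarrow> tanh x \<le> (x::real)"
proof -
  assume x: "x \<ge> 0"
  have "0 - tanh 0 \<le> x - tanh x"
  proof (rule DERIV_nonneg_imp_nondecreasing[OF x])
    fix y :: real
    have "((\<lambda>y. y - tanh y) has_real_derivative tanh y ^ 2) (at y)"
      by (auto intro!: derivative_eq_intros)
    then show "\<exists>d. ((\<lambda>y. y - tanh y) has_real_derivative d) (at y) \<and> d \<ge> 0"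
      using zero_le_power2 by blast
  qed
  then show ?thesis by simp
qed

lemma abs_tanh_le_abs: "\<bar>tanh x\<bar> \<le> \<bar>x::real\<bar>"
  using tanh_le_self[of "\<bar>x\<bar>"] by simp

lemma cosh_le_exp_half_square: "cosh (x::real) \<le> exp (x\<^sup>2 / 2)"
proof -
  have "0\<^sup>2 / 2 - ln (cosh 0) \<le> \<bar>x\<bar>\<^sup>2 / 2 - ln (cosh \<bar>x\<bar>)"
  proof (rule DERIV_nonneg_imp_nondecreasing[of 0])
    fix y :: real
    assume "0 \<le> y"
    have "((\<lambda>y. y\<^sup>2 / 2 - ln (cosh y)) has_real_derivative y - tanh y) (at y)"
      by (auto intro!: derivative_eq_intros simp: tanh_def power2_eq_square)
    then show "\<exists>d. ((\<lambda>y. y\<^sup>2 / 2 - ln (cosh y)) has_real_derivative d) (at y) \<and> d \<ge> 0"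
      using tanh_le_self[OF \<open>0 \<le> y\<close>] by force
  qed simp
  then have "ln (cosh x) \<le> x\<^sup>2 / 2" by simp
  then show ?thesis
    by (metis cosh_real_pos exp_le_cancel_iff exp_ln)
qed

lemma power_even_part_bounds:
  fixes v :: real
  assumes "\<bar>v\<bar> \<le> 1"
  shows "1 \<le> ((1 + v) ^ s + (1 - v) ^ s) / 2" and "((1 + v) ^ s + (1 - v) ^ s) / 2 \<le> cosh (real s * v)"
proof -
  have "1 + real s * v \<le> (1 + v) ^ s" "1 + real s * (- v) \<le> (1 + (- v)) ^ s"
    using assms by (intro Bernoulli_inequality; simp)+
  then show "1 \<le> ((1 + v) ^ s + (1 - v) ^ s) / 2" by simp
  have "(1 + v) ^ s \<le> exp v ^ s" "(1 - v) ^ s \<le> exp (- v) ^ s"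
    using assms exp_ge_add_one_self[of v] exp_ge_add_one_self[of "- v"] by (intro power_mono; simp)+
  then show "((1 + v) ^ s + (1 - v) ^ s) / 2 \<le> cosh (real s * v)"
    by (simp add: cosh_field_def exp_of_nat_mult[symmetric])
qed

lemma cosh_add_eq_tanh: "cosh (y + a) = cosh y * cosh a * (1 + tanh y * tanh (a::real))"
  by (simp add: cosh_add tanh_def field_simps)

lemma cosh_shift_power_average_bounds:
  fixes y a :: real and s :: nat
  defines "m \<equiv> ((2 * cosh (y + a)) ^ s + (2 * cosh (y - a)) ^ s) / (2 * cosh a ^ s)"
  shows "(2 * cosh y) ^ s \<le> m" and "m \<le> (2 * cosh y) ^ s * cosh (real s * \<bar>tanh a\<bar> * y)"
proof -
  define t where "t = tanh y * tanh a"
  have t: "\<bar>t\<bar> \<le> 1"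
    using tanh_real_bounds[of y] tanh_real_bounds[of a] by (auto simp: t_def abs_mult mult_le_one)
  have plus: "cosh (y + a) = cosh y * cosh a * (1 + t)"
    and minus: "cosh (y - a) = cosh y * cosh a * (1 - t)"
    using cosh_add_eq_tanh[of y a] cosh_add_eq_tanh[of y "- a"] by (simp_all add: t_def)
  have m: "m = (2 * cosh y) ^ s * (((1 + t) ^ s + (1 - t) ^ s) / 2)"
    unfolding m_def plus minus
    by (simp only: mult.assoc[symmetric] power_mult_distrib) (simp add: field_simps)
  have "\<bar>tanh y\<bar> * \<bar>tanh a\<bar> \<le> \<bar>y\<bar> * \<bar>tanh a\<bar>"
    using abs_tanh_le_abs[of y] by (rule mult_right_mono) simp
  then have "real s * (\<bar>tanh y\<bar> * \<bar>tanh a\<bar>) \<le> real s * (\<bar>y\<bar> * \<bar>tanh a\<bar>)"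
    by (rule mult_left_mono) simp
  then have "\<bar>real s * t\<bar> \<le> \<bar>real s * \<bar>tanh a\<bar> * y\<bar>"
    by (simp add: t_def abs_mult mult_ac)
  then have "cosh (real s * t) \<le> cosh (real s * \<bar>tanh a\<bar> * y)"
    by (metis abs_ge_zero cosh_real_abs cosh_real_nonneg_le_iff)
  then have "((1 + t) ^ s + (1 - t) ^ s) / 2 \<le> cosh (real s * \<bar>tanh a\<bar> * y)"
    using power_even_part_bounds(2)[OF t, of s] by simp
  then show "m \<le> (2 * cosh y) ^ s * cosh (real s * \<bar>tanh a\<bar> * y)"
    unfolding m by (simp add: mult_left_mono)
  show "(2 * cosh y) ^ s \<le> m"
    unfolding m using power_even_part_bounds(1)[OF t, of s] by (simp add: mult_le_cancel_left1)
qed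

lemma hs_integrand_excess_bounds:
  fixes a g :: real
  assumes "s \<le> n" and "real n * c\<^sup>2 \<le> \<beta>"
  defines "F \<equiv> (hs_integrand n c s a g + hs_integrand n c s (- a) g) / (2 * cosh a ^ s)
                 - hs_integrand n c s 0 g"
  shows "0 \<le> F" and "F \<le> 2 ^ n * (exp (- (1 - \<beta>) * g\<^sup>2 / 2) * (cosh (real s * \<bar>tanh a\<bar> * c * g) - 1))"
proof -
  define y where "y = c * g"
  define m where "m = ((2 * cosh (y + a)) ^ s + (2 * cosh (y - a)) ^ s) / (2 * cosh a ^ s)"
  define P where "P = exp (- g\<^sup>2 / 2) * (2 * cosh y) ^ (n - s)"
  have P: "P \<ge> 0" by (simp add: P_def)
  have n_split: "(2 * cosh y) ^ (n - s) * (2 * cosh y) ^ s = (2 * cosh y) ^ n"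
    by (metis assms(1) le_add_diff_inverse2 power_add)
  have F: "F = P * (m - (2 * cosh y) ^ s)"
    unfolding F_def P_def m_def y_def hs_integrand_def by (simp add: field_simps n_split)
  show "0 \<le> F"
    unfolding F using P cosh_shift_power_average_bounds(1)[where y=y and a=a and s=s] by (simp add: m_def)
  have "(2 * cosh y) ^ n \<le> (2 * exp (y\<^sup>2 / 2)) ^ n"
    by (intro power_mono mult_left_mono cosh_le_exp_half_square) simp_all
  also have "\<dots> = 2 ^ n * exp (real n * c\<^sup>2 * g\<^sup>2 / 2)"
    by (simp add: y_def power_mult_distrib exp_of_nat_mult[symmetric] mult_ac)
  also have "\<dots> \<le> 2 ^ n * exp (\<beta> * g\<^sup>2 / 2)"
    using assms(2) by (simp add: mult_right_mono)
  finally have "P * (2 * cosh y) ^ s \<le> exp (- g\<^sup>2 / 2) * (2 ^ n * exp (\<beta> * g\<^sup>2 / 2))"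
    unfolding P_def mult.assoc n_split by (intro mult_left_mono) auto
  also have "\<dots> = 2 ^ n * exp (- (1 - \<beta>) * g\<^sup>2 / 2)"
    by (simp add: mult.left_commute exp_add[symmetric] field_simps)
  finally have P_bound: "P * (2 * cosh y) ^ s \<le> 2 ^ n * exp (- (1 - \<beta>) * g\<^sup>2 / 2)" .
  have "F \<le> P * ((2 * cosh y) ^ s * (cosh (real s * \<bar>tanh a\<bar> * y) - 1))"
    unfolding F using P cosh_shift_power_average_bounds(2)[where y=y and a=a and s=s]
    by (intro mult_left_mono) (simp_all add: m_def algebra_simps)
  also have "\<dots> \<le> 2 ^ n * exp (- (1 - \<beta>) * g\<^sup>2 / 2) * (cosh (real s * \<bar>tanh a\<bar> * y) - 1)"
    unfolding mult.assoc[symmetric] using P_bound by (intro mult_right_mono) (simp_all add: cosh_real_ge_1)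
  finally show "F \<le> 2 ^ n * (exp (- (1 - \<beta>) * g\<^sup>2 / 2) * (cosh (real s * \<bar>tanh a\<bar> * c * g) - 1))"
    by (simp add: y_def mult_ac)
qed

lemma cw_Z_excess_bounds:
  fixes a :: real
  assumes "0 \<le> \<beta>" "\<beta> < 1" "S \<subseteq> {..<n}"
  defines "\<epsilon> \<equiv> real (card S) * \<bar>tanh a\<bar> * sqrt (\<beta> / n)"
    and "D \<equiv> cw_Z n \<beta> S a / cosh a ^ card S - cw_Z n \<beta> S 0"
  shows "0 \<le> D" and "D \<le> 2 ^ n * (exp (\<epsilon>\<^sup>2 / (2 * (1 - \<beta>))) - 1) / sqrt (1 - \<beta>)"
proof -
  define c where "c = sqrt (\<beta> / n)"
  define s where "s = card S"
  define B where "B = 2 ^ n * (exp (\<epsilon>\<^sup>2 / (2 * (1 - \<beta>))) - 1) / sqrt (1 - \<beta>)"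
  define F where "F g = (hs_integrand n c s a g + hs_integrand n c s (- a) g) / (2 * cosh a ^ s)
                         - hs_integrand n c s 0 g" for g
  define U where "U g = 2 ^ n * (exp (- (1 - \<beta>) * g\<^sup>2 / 2) * (cosh (\<epsilon> * g) - 1))" for g
  have int_F: "has_bochner_integral lborel F (sqrt (2 * pi) * D)"
    unfolding F_def D_def c_def s_def using cw_Z_excess_has_integral[OF assms(1,3)] .
  have "has_bochner_integral lborel U (2 ^ n * (sqrt (2 * pi / (1 - \<beta>)) * (exp (\<epsilon>\<^sup>2 / (2 * (1 - \<beta>))) - 1)))"
    unfolding U_def using assms(2)
    by (intro has_bochner_integral_mult_right has_bochner_integral_gaussian_cosh_minus_one) simp
  then have int_U: "has_bochner_integral lborel U (sqrt (2 * pi) * B)"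
    by (simp add: B_def real_sqrt_divide mult_ac)
  have "s \<le> n"
    using assms(3) card_mono[of "{..<n}" S] by (simp add: s_def)
  moreover have "real n * c\<^sup>2 \<le> \<beta>"
    using assms(1) by (cases "n = 0") (simp_all add: c_def)
  ultimately have F_bounds: "0 \<le> F g" "F g \<le> U g" for g
    using hs_integrand_excess_bounds[of s n c \<beta> a g]
    by (simp_all add: F_def U_def \<epsilon>_def c_def s_def mult_ac)
  have "0 \<le> integral\<^sup>L lborel F"
    using F_bounds(1) by (intro Bochner_Integration.integral_nonneg) simp
  then show "0 \<le> D"
    using int_F pi_gt_zero by (simp add: has_bochner_integral_integral_eq zero_le_mult_iff)
  have "integral\<^sup>L lborel F \<le> integral\<^sup>L lborel U"
    using int_F int_U F_bounds(2)
    by (intro Bochner_Integration.integral_mono) (auto simp: has_bochner_integral_iff)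
  then have "sqrt (2 * pi) * D \<le> sqrt (2 * pi) * B"
    using int_F int_U by (simp add: has_bochner_integral_integral_eq)
  then show "D \<le> B" by simp
qed

lemma cw_Z_ratio_bounds:
  fixes a :: real
  assumes "0 \<le> \<beta>" "\<beta> < 1" "S \<subseteq> {..<n}"
  defines "\<epsilon> \<equiv> real (card S) * \<bar>tanh a\<bar> * sqrt (\<beta> / n)"
    and "\<rho> \<equiv> cw_Z n \<beta> S a / (cosh a ^ card S * cw_Z n \<beta> S 0)"
  shows "1 \<le> \<rho>" and "\<rho> \<le> 1 + (exp (\<epsilon>\<^sup>2 / (2 * (1 - \<beta>))) - 1) / sqrt (1 - \<beta>)"
proof -
  define D where "D = cw_Z n \<beta> S a / cosh a ^ card S - cw_Z n \<beta> S 0"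
  define K where "K = (exp (\<epsilon>\<^sup>2 / (2 * (1 - \<beta>))) - 1) / sqrt (1 - \<beta>)"
  have D: "0 \<le> D" "D \<le> 2 ^ n * K"
    using cw_Z_excess_bounds[OF assms(1-3), of a] by (simp_all add: D_def K_def \<epsilon>_def)
  have W0: "2 ^ n \<le> cw_Z n \<beta> S 0"
    using cw_Z_zero_ge[OF assms(1)] .
  have W0_pos: "0 < cw_Z n \<beta> S 0"
    by (rule cw_Z_pos)
  have \<rho>: "\<rho> = 1 + D / cw_Z n \<beta> S 0"
    using W0_pos by (simp add: \<rho>_def D_def field_simps)
  show "1 \<le> \<rho>"
    unfolding \<rho> using D(1) W0_pos by simp
  have "D / cw_Z n \<beta> S 0 \<le> D / 2 ^ n"
    using D(1) W0 W0_pos by (intro divide_left_mono) simp_all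
  also have "\<dots> \<le> K"
    using D(2) by (simp add: field_simps)
  finally show "\<rho> \<le> 1 + (exp (\<epsilon>\<^sup>2 / (2 * (1 - \<beta>))) - 1) / sqrt (1 - \<beta>)"
    unfolding \<rho> K_def by simp
qed

lemma cw_Z_ratio_tendsto_1:
  fixes a :: "nat \<Rightarrow> real" and S :: "nat \<Rightarrow> nat set"
  assumes "0 \<le> \<beta>" "\<beta> < 1" "\<And>n. S n \<subseteq> {..<n}"
    and "(\<lambda>n. real (card (S n)) * \<bar>tanh (a n)\<bar> / sqrt n) \<longlonglongrightarrow> 0"
  shows "(\<lambda>n. cw_Z n \<beta> (S n) (a n) / (cosh (a n) ^ card (S n) * cw_Z n \<beta> (S n) 0)) \<longlonglongrightarrow> 1"
proof -
  define \<rho> where "\<rho> n = cw_Z n \<beta> (S n) (a n) / (cosh (a n) ^ card (S n) * cw_Z n \<beta> (S n) 0)" for n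
  define \<epsilon> where "\<epsilon> n = real (card (S n)) * \<bar>tanh (a n)\<bar> * sqrt (\<beta> / n)" for n
  define K where "K e = 1 + (exp (e\<^sup>2 / (2 * (1 - \<beta>))) - 1) / sqrt (1 - \<beta>)" for e
  have "(\<lambda>n. sqrt \<beta> * (real (card (S n)) * \<bar>tanh (a n)\<bar> / sqrt n)) \<longlonglongrightarrow> sqrt \<beta> * 0"
    by (intro tendsto_intros assms(4))
  moreover have "\<epsilon> n = sqrt \<beta> * (real (card (S n)) * \<bar>tanh (a n)\<bar> / sqrt n)" for n
    by (simp add: \<epsilon>_def real_sqrt_divide)
  ultimately have "(\<lambda>n. \<epsilon> n) \<longlonglongrightarrow> 0"
    by simp
  then have "(\<lambda>n. K (\<epsilon> n)) \<longlonglongrightarrow> K 0"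
    unfolding K_def using assms(2) by (intro tendsto_intros) simp_all
  then have K_lim: "(\<lambda>n. K (\<epsilon> n)) \<longlonglongrightarrow> 1"
    by (simp add: K_def)
  have "1 \<le> \<rho> n" "\<rho> n \<le> K (\<epsilon> n)" for n
    using cw_Z_ratio_bounds[OF assms(1,2,3), of n "a n"] unfolding \<rho>_def K_def \<epsilon>_def by blast+
  then have "\<forall>\<^sub>F n in sequentially. 1 \<le> \<rho> n" "\<forall>\<^sub>F n in sequentially. \<rho> n \<le> K (\<epsilon> n)"
    by simp_all
  from tendsto_sandwich[OF this tendsto_const K_lim] show ?thesis
    unfolding \<rho>_def .
qed

theorem mainTheorem9:
  fixes \<beta> :: real and s :: "nat \<Rightarrow> nat" and S :: "nat \<Rightarrow> nat set"
    and A :: "nat \<Rightarrow> real" and lam :: "nat \<Rightarrow> real"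
  assumes "0 \<le> \<beta>" and "\<beta> < 1"
    and "(\<lambda>n. real (s n) / (real n / ln (real n))) \<longlonglongrightarrow> 0"
    and "\<And>n. S n \<subseteq> {..<n}" and "\<And>n. card (S n) = s n"
    and "\<And>n. A n \<ge> 0"
    and "(\<lambda>n. real (s n) * max \<bar>tanh (lam n + A n)\<bar> (tanh (A n)) / sqrt (real n)) \<longlonglongrightarrow> 0"
  shows "(\<lambda>n. ising_expect n \<beta> (Q_CW n) (mu_S (S n) (A n))
                 (\<lambda>x. exp (lam n * (\<Sum>i\<in>S n. x i)))
             / (cosh (A n + lam n) / cosh (A n)) ^ s n) \<longlonglongrightarrow> 1"
proof -
  define \<rho> where "\<rho> a n = cw_Z n \<beta> (S n) a / (cosh a ^ s n * cw_Z n \<beta> (S n) 0)" for a n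
  have \<rho>_lim: "(\<lambda>n. \<rho> (f n) n) \<longlonglongrightarrow> 1"
    if "\<And>n. \<bar>tanh (f n)\<bar> \<le> max \<bar>tanh (lam n + A n)\<bar> (tanh (A n))" for f
  proof -
    have "(\<lambda>n. real (s n) * \<bar>tanh (f n)\<bar> / sqrt n) \<longlonglongrightarrow> 0"
      using that
      by (intro tendsto_sandwich[OF _ _ tendsto_const assms(7)] always_eventually allI
          divide_right_mono mult_left_mono) auto
    then show ?thesis
      using cw_Z_ratio_tendsto_1[OF assms(1,2,4)] by (simp add: \<rho>_def assms(5))
  qed
  have "(\<lambda>n. \<rho> (A n + lam n) n / \<rho> (A n) n) \<longlonglongrightarrow> 1 / 1"
    using \<rho>_lim[of "\<lambda>n. A n + lam n"] \<rho>_lim[of A] assms(6)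
    by (intro tendsto_divide) (simp_all add: add.commute)
  moreover have "\<forall>\<^sub>F n in sequentially. \<rho> (A n + lam n) n / \<rho> (A n) n =
      ising_expect n \<beta> (Q_CW n) (mu_S (S n) (A n)) (\<lambda>x. exp (lam n * (\<Sum>i\<in>S n. x i)))
        / (cosh (A n + lam n) / cosh (A n)) ^ s n"
    using eventually_gt_at_top[of 0]
    by (rule eventually_mono)
      (simp add: ising_expect_CW_exp assms(4) \<rho>_def cw_Z_pos[THEN less_imp_neq, THEN not_sym]
        field_simps power_divide)
  ultimately show ?thesis
    by (simp add: Lim_transform_eventually)
qed

end
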